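(* Let $d\ge1$, let $(\varphi_n)_{n=0}^\infty$ with $\varphi_0\equiv1$ be a basis in $H(\mathbb{C}^d)$, and let $K\subset K_1$ be compact subsets of $\mathbb{C}^d$ such that for every entire function $h=\sum_{n=0}^\infty h_n\varphi_n$ we have $\sum_{n=0}^\infty|h_n|\,|\varphi_n|_K\le |h|_{K_1}$. Suppose $G\supset K_1$ is a domain in $\mathbb{C}^d$ such that $(\varphi_n)$ (restricted to $G$) is also a basis of $H(G)$. Then for every bounded holomorphic function $f$ on $G$ with expansion $f=\sum_{n=0}^\infty f_n\varphi_n$ in $H(G)$, $$\sum_{n=0}^\infty |f_n|\,|\varphi_n|_K\le \sup_{z\in G}|f(z)|.$$
   Context: $H(G)$ is the space of holomorphic functions on a domain $G$ with the topology of uniform convergence on compact subsets; a basis of $H(G)$ is a sequence such that every $f\in H(G)$ has a unique expansion $f=\sum f_n\varphi_n$ converging uniformly on compact subsets of $G$. $|f|_K:=\sup_K|f|$. *)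

theory Defs
  imports "HOL-Analysis.Analysis"
begin

text \<open>Points of C^d are vectors complex^'n, with 'n a finite index type (d = CARD('n) \<ge> 1).\<close>

definition holo_on :: "(complex^'n) set \<Rightarrow> ((complex^'n) \<Rightarrow> complex) \<Rightarrow> bool" where
  "holo_on G f \<longleftrightarrow> (\<forall>z\<in>G. \<exists>c::complex^'n.
      (f has_derivative (\<lambda>h. \<Sum>i\<in>UNIV. c$i * h$i)) (at z))"

text \<open>Sup norm |f|_K (with the convention |f|_{empty} = 0).\<close>
definition supnorm :: "'a set \<Rightarrow> ('a \<Rightarrow> complex) \<Rightarrow> real" where
  "supnorm K f = Sup (insert 0 ((\<lambda>z. norm (f z)) ` K))"

definition expansion :: "(complex^'n) set \<Rightarrow> (nat \<Rightarrow> complex^'n \<Rightarrow> complex)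
    \<Rightarrow> (nat \<Rightarrow> complex) \<Rightarrow> (complex^'n \<Rightarrow> complex) \<Rightarrow> bool" where
  "expansion G \<phi> c f \<longleftrightarrow> (\<forall>K. compact K \<and> K \<subseteq> G \<longrightarrow>
      uniform_limit K (\<lambda>N z. \<Sum>n<N. c n * \<phi> n z) f sequentially)"

definition is_basis :: "(complex^'n) set \<Rightarrow> (nat \<Rightarrow> complex^'n \<Rightarrow> complex) \<Rightarrow> bool" where
  "is_basis G \<phi> \<longleftrightarrow> (\<forall>n. holo_on G (\<phi> n)) \<and>
      (\<forall>f. holo_on G f \<longrightarrow> (\<exists>!c. expansion G \<phi> c f))"

end

theory Submission
  imports Defs
begin

text \<open>
  Let S be the supremum of |f| on G. The N-th partial sum
  h_N = \<Sum>n<N. c_n \<phi>_n of the expansion of f is an entire function whose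
  expansion in the basis is the truncated coefficient sequence, so the
  hypothesis on entire functions gives  \<Sum>n<N |c_n| |\<phi>_n|_K \<le> |h_N|_{K1}.
  Since K1 is a compact subset of G, h_N \<rightarrow> f uniformly on K1, hence
  |h_N|_{K1} \<le> S + e for all large N. Thus the nonnegative series
  \<Sum> |c_n| |\<phi>_n|_K has partial sums bounded by S + e for every e > 0,
  so it converges with sum at most S.
\<close>

lemma holo_on_lincomb:
  fixes \<phi> :: "nat \<Rightarrow> complex^'n \<Rightarrow> complex" and c :: "nat \<Rightarrow> complex"
  assumes "\<And>n. holo_on G (\<phi> n)"
  shows "holo_on G (\<lambda>z. \<Sum>n<N. c n * \<phi> n z)"
  unfolding holo_on_def
proof
  fix z assume "z \<in> G"
  then have "\<forall>n. \<exists>d::complex^'n. (\<phi> n has_derivative (\<lambda>h. \<Sum>i\<in>UNIV. d$i * h$i)) (at z)"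
    using assms unfolding holo_on_def by blast
  then obtain d where d: "\<And>n. (\<phi> n has_derivative (\<lambda>h. \<Sum>i\<in>UNIV. d n $ i * h$i)) (at z)"
    by metis
  have deriv: "((\<lambda>z. \<Sum>n<N. c n * \<phi> n z) has_derivative
      (\<lambda>h. \<Sum>n<N. c n * (\<Sum>i\<in>UNIV. d n $ i * h$i))) (at z)"
    by (intro has_derivative_sum has_derivative_mult_right d)
  have "(\<lambda>h. \<Sum>n<N. c n * (\<Sum>i\<in>UNIV. d n $ i * h$i)) =
        (\<lambda>h. \<Sum>i\<in>UNIV. (\<chi> i. \<Sum>n<N. c n * d n $ i) $ i * h$i)"
    by (auto simp: sum_distrib_left sum_distrib_right mult.assoc intro!: ext sum.swap)
  with deriv show "\<exists>e::complex^'n.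
      ((\<lambda>z. \<Sum>n<N. c n * \<phi> n z) has_derivative (\<lambda>h. \<Sum>i\<in>UNIV. e$i * h$i)) (at z)"
    by metis
qed

text \<open>Holomorphic functions are continuous; needed to see that sup norms
  over compact sets are genuine (finite) suprema.\<close>
lemma holo_on_imp_continuous_on:
  fixes f :: "complex^'n \<Rightarrow> complex"
  assumes "holo_on G f"
  shows "continuous_on G f"
proof (rule continuous_at_imp_continuous_on, intro ballI)
  fix z assume "z \<in> G"
  then obtain d :: "complex^'n" where "(f has_derivative (\<lambda>h. \<Sum>i\<in>UNIV. d$i * h$i)) (at z)"
    using assms unfolding holo_on_def by blast
  then show "isCont f z" by (rule has_derivative_continuous)
qed

lemma supnorm_nonneg:
  fixes g :: "'a::topological_space \<Rightarrow> complex"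
  assumes "compact A" "continuous_on A g"
  shows "0 \<le> supnorm A g"
proof -
  have "bounded (g ` A)" using assms by (intro compact_imp_bounded compact_continuous_image)
  then have "bdd_above ((\<lambda>z. norm (g z)) ` A)"
    unfolding bounded_iff bdd_above_def by auto
  then show ?thesis unfolding supnorm_def by (intro cSup_upper) auto
qed

lemma supnorm_le:
  assumes "\<And>z. z \<in> A \<Longrightarrow> norm (g z) \<le> B" "0 \<le> B"
  shows "supnorm A g \<le> B"
  unfolding supnorm_def using assms by (intro cSup_least) auto

lemma supnorm_uniform_limit_bound:
  fixes g :: "'b \<Rightarrow> 'a \<Rightarrow> complex"
  assumes lim: "uniform_limit A g f F" and f_le: "\<And>z. z \<in> A \<Longrightarrow> norm (f z) \<le> S"
    and "0 \<le> S" "0 < e"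
  shows "\<forall>\<^sub>F N in F. supnorm A (g N) \<le> S + e"
  using uniform_limitD[OF lim \<open>0 < e\<close>]
proof eventually_elim
  case (elim N)
  show ?case
  proof (rule supnorm_le)
    fix z assume "z \<in> A"
    have "norm (g N z) \<le> norm (f z) + dist (g N z) (f z)"
      by (simp add: dist_norm norm_triangle_sub)
    then show "norm (g N z) \<le> S + e" using elim f_le[OF \<open>z \<in> A\<close>] \<open>z \<in> A\<close> by fastforce
  qed (use \<open>0 \<le> S\<close> \<open>0 < e\<close> in simp)
qed

text \<open>A finite sum \<Sum>n<N. c_n \<phi>_n is expanded by the truncated coefficient
  sequence, on any domain: its partial sums are eventually constant.\<close>
lemma expansion_finite_sum:
  fixes \<phi> :: "nat \<Rightarrow> complex^'n \<Rightarrow> complex"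
  shows "expansion G \<phi> (\<lambda>n. if n < N then c n else 0) (\<lambda>z. \<Sum>n<N. c n * \<phi> n z)"
  unfolding expansion_def
proof (intro allI impI uniform_limitI)
  fix L :: "(complex^'n) set" and e :: real
  assume "0 < e"
  have "(\<Sum>n<M. (if n < N then c n else 0) * \<phi> n z) = (\<Sum>n<N. c n * \<phi> n z)"
    if "N \<le> M" for M z
  proof -
    have "(\<Sum>n<M. (if n < N then c n else 0) * \<phi> n z) =
          (\<Sum>n<N. (if n < N then c n else 0) * \<phi> n z)"
      using that by (intro sum.mono_neutral_right) auto
    then show ?thesis by simp
  qed
  then show "\<forall>\<^sub>F M in sequentially. \<forall>z\<in>L.
      dist (\<Sum>n<M. (if n < N then c n else 0) * \<phi> n z) (\<Sum>n<N. c n * \<phi> n z) < e"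
    using \<open>0 < e\<close> unfolding eventually_sequentially by (intro exI[of _ N]) auto
qed

lemma summable_le_of_frequent_bounds:
  fixes t :: "nat \<Rightarrow> real"
  assumes nonneg: "\<And>n. 0 \<le> t n"
    and frequent: "\<And>e M. 0 < e \<Longrightarrow> \<exists>N\<ge>M. sum t {..<N} \<le> S + e"
  shows "summable t \<and> suminf t \<le> S"
proof -
  have bound: "sum t {..<M} \<le> S" for M
  proof (rule field_le_epsilon)
    fix e :: real assume "0 < e"
    then obtain N where "N \<ge> M" "sum t {..<N} \<le> S + e" using frequent by blast
    moreover have "sum t {..<M} \<le> sum t {..<N}"
      using \<open>N \<ge> M\<close> nonneg by (intro sum_mono2) auto
    ultimately show "sum t {..<M} \<le> S + e" by linarith
  qed
  have "summable t" by (rule summableI_nonneg_bounded[OF nonneg bound])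
  then show ?thesis using suminf_le_const bound by blast
qed

lemma finite_sum_bound:
  fixes \<phi> :: "nat \<Rightarrow> complex^'n \<Rightarrow> complex"
  assumes holo: "\<And>n. holo_on UNIV (\<phi> n)"
    and ineq: "\<And>h a. holo_on UNIV h \<Longrightarrow> expansion UNIV \<phi> a h \<Longrightarrow>
        summable (\<lambda>n. norm (a n) * supnorm K (\<phi> n)) \<and>
        (\<Sum>n. norm (a n) * supnorm K (\<phi> n)) \<le> supnorm K1 h"
  shows "(\<Sum>n<N. norm (c n) * supnorm K (\<phi> n)) \<le> supnorm K1 (\<lambda>z. \<Sum>n<N. c n * \<phi> n z)"
proof -
  define a where "a n = (if n < N then c n else 0)" for n
  have "(\<Sum>n. norm (a n) * supnorm K (\<phi> n)) \<le> supnorm K1 (\<lambda>z. \<Sum>n<N. c n * \<phi> n z)"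
    using ineq[OF holo_on_lincomb[OF holo] expansion_finite_sum] unfolding a_def by blast
  moreover have "(\<Sum>n. norm (a n) * supnorm K (\<phi> n)) = (\<Sum>n<N. norm (c n) * supnorm K (\<phi> n))"
    by (subst suminf_finite[of "{..<N}"]) (auto simp: a_def)
  ultimately show ?thesis by simp
qed

theorem mainTheorem4:
  fixes \<phi> :: "nat \<Rightarrow> complex^'n \<Rightarrow> complex"
    and K K1 G :: "(complex^'n) set"
    and f :: "complex^'n \<Rightarrow> complex" and c :: "nat \<Rightarrow> complex"
  assumes phi0: "\<phi> 0 = (\<lambda>_. 1)"
    and basis_entire: "is_basis UNIV \<phi>"
    and cK: "compact K" and cK1: "compact K1" and KK1: "K \<subseteq> K1"
    and ineq: "\<And>h a. holo_on UNIV h \<Longrightarrow> expansion UNIV \<phi> a h \<Longrightarrow>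
        summable (\<lambda>n. norm (a n) * supnorm K (\<phi> n)) \<and>
        (\<Sum>n. norm (a n) * supnorm K (\<phi> n)) \<le> supnorm K1 h"
    and G_open: "open G" and G_conn: "connected G" and G_ne: "G \<noteq> {}"
    and K1G: "K1 \<subseteq> G"
    and basis_G: "is_basis G \<phi>"
    and f_holo: "holo_on G f" and f_bdd: "bounded (f ` G)"
    and f_exp: "expansion G \<phi> c f"
  shows "summable (\<lambda>n. norm (c n) * supnorm K (\<phi> n)) \<and>
         (\<Sum>n. norm (c n) * supnorm K (\<phi> n)) \<le> (SUP z\<in>G. norm (f z))"
proof (rule summable_le_of_frequent_bounds)
  define S where "S = (SUP z\<in>G. norm (f z))"
  have holo: "\<And>n. holo_on UNIV (\<phi> n)" using basis_entire unfolding is_basis_def by blast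
  show "0 \<le> norm (c n) * supnorm K (\<phi> n)" for n
    using supnorm_nonneg[OF cK continuous_on_subset[OF holo_on_imp_continuous_on[OF holo]]]
    by simp
  have f_le: "norm (f z) \<le> S" if "z \<in> G" for z
    using f_bdd that unfolding S_def bounded_iff by (intro cSUP_upper) (auto intro: bdd_aboveI2)
  then have "0 \<le> S" using G_ne by (meson ex_in_conv norm_ge_zero order_trans)
  fix e :: real and M :: nat assume "0 < e"
  have "uniform_limit K1 (\<lambda>N z. \<Sum>n<N. c n * \<phi> n z) f sequentially"
    using f_exp cK1 K1G unfolding expansion_def by blast
  from supnorm_uniform_limit_bound[OF this _ \<open>0 \<le> S\<close> \<open>0 < e\<close>] f_le K1G
  obtain N0 where "\<And>N. N \<ge> N0 \<Longrightarrow> supnorm K1 (\<lambda>z. \<Sum>n<N. c n * \<phi> n z) \<le> S + e"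
    unfolding eventually_sequentially by blast
  then have "(\<Sum>n<max M N0. norm (c n) * supnorm K (\<phi> n)) \<le> S + e"
    using finite_sum_bound[OF holo ineq] by (meson max.cobounded2 order_trans)
  then show "\<exists>N\<ge>M. (\<Sum>n<N. norm (c n) * supnorm K (\<phi> n)) \<le> (SUP z\<in>G. norm (f z)) + e"
    unfolding S_def by (meson max.cobounded1)
qed

end
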